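(* $\mathrm{Pol}(\mathbb{M}_1)$ does not satisfy $\Sigma_1$, but $\mathcal{C}_2$ satisfies $\Sigma_1$.
   Context: $\mathbb{M}_1=(\{0,1,2\};\psi_2,\mu_2,\{0\},\{1\},\{2\})$ with $\psi_2=\{(0,1),(1,0),(2,2)\}$ and $\mu_2$ the equivalence relation with classes $\{0,1\},\{2\}$; $\mathcal{C}_2=\mathrm{Pol}(\{0,1\};\neq,\{0\},\{1\})$, where $\mathrm{Pol}$ denotes the clone of all operations preserving the given relations. A clone satisfies $\Sigma_1$ if it contains a ternary operation $f$ that is a quasi majority operation, i.e. $f(x,y,y)\approx f(y,x,y)\approx f(y,y,x)\approx f(y,y,y)$, and additionally satisfies $f(x,y,z)\approx f(z,y,x)$. *)

theory Defs
  imports Main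
begin

text \<open>Relations on a domain are represented as sets of tuples (lists of equal length).\<close>

definition preserves3 :: "('a \<Rightarrow> 'a \<Rightarrow> 'a \<Rightarrow> 'a) \<Rightarrow> 'a list set \<Rightarrow> bool" where
  "preserves3 f R \<longleftrightarrow>
     (\<forall>r1\<in>R. \<forall>r2\<in>R. \<forall>r3\<in>R. length r1 = length r2 \<and> length r2 = length r3 \<longrightarrow>
        map (\<lambda>i. f (r1 ! i) (r2 ! i) (r3 ! i)) [0..<length r1] \<in> R)"

definition Pol3 :: "'a set \<Rightarrow> 'a list set set \<Rightarrow> ('a \<Rightarrow> 'a \<Rightarrow> 'a \<Rightarrow> 'a) set" where
  "Pol3 A Rs = {f. (\<forall>x\<in>A. \<forall>y\<in>A. \<forall>z\<in>A. f x y z \<in> A) \<and> (\<forall>R\<in>Rs. preserves3 f R)}"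

definition quasi_majority :: "'a set \<Rightarrow> ('a \<Rightarrow> 'a \<Rightarrow> 'a \<Rightarrow> 'a) \<Rightarrow> bool" where
  "quasi_majority A f \<longleftrightarrow>
     (\<forall>x\<in>A. \<forall>y\<in>A. f x y y = f y x y \<and> f y x y = f y y x \<and> f y y x = f y y y)"

definition satisfies_Sigma1 :: "'a set \<Rightarrow> 'a list set set \<Rightarrow> bool" where
  "satisfies_Sigma1 A Rs \<longleftrightarrow>
     (\<exists>f\<in>Pol3 A Rs. quasi_majority A f \<and> (\<forall>x\<in>A. \<forall>y\<in>A. \<forall>z\<in>A. f x y z = f z y x))"

definition psi2 :: "nat list set" where "psi2 = {[0,1],[1,0],[2,2]}"
definition mu2 :: "nat list set" where "mu2 = {[0,0],[0,1],[1,0],[1,1],[2,2]}"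
definition M1_rels :: "nat list set set" where
  "M1_rels = {psi2, mu2, {[0]}, {[1]}, {[2]}}"

definition neq01 :: "nat list set" where "neq01 = {[0,1],[1,0]}"
definition C2_rels :: "nat list set set" where
  "C2_rels = {neq01, {[0]}, {[1]}}"

end

theory Submission
  imports Defs
begin

text \<open>
  Let f be a polymorphism of M_1 with f x y z = f z y x. Applied columnwise to the psi2-tuples
  (0,1), (2,2), (1,0) it yields the psi2-tuple (f 0 2 1, f 1 2 0), whose entries agree by symmetry,
  so f 0 2 1 = 2. Applied to the mu2-tuples (0,0), (2,2), (1,0) it yields (f 0 2 1, f 0 2 0), and
  f 0 2 0 = f 0 0 0 = 0 for a quasi majority operation preserving {0}; but (2, 0) is not in mu2.
  On {0,1} the majority operation witnesses Sigma_1: it commutes with every injective map, hence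
  preserves the graph of negation, which is the relation neq01.
\<close>

lemma preserves3_singleton_iff: "preserves3 f {[a]} \<longleftrightarrow> f a a a = a"
  by (simp add: preserves3_def)

lemma preserves3D:
  assumes "preserves3 f R" "r1 \<in> R" "r2 \<in> R" "r3 \<in> R"
    and "length r1 = length r2" "length r2 = length r3"
  shows "map (\<lambda>i. f (r1 ! i) (r2 ! i) (r3 ! i)) [0..<length r1] \<in> R"
  using assms unfolding preserves3_def by blast

lemma preserves3_binaryD:
  assumes "preserves3 f R" "[a, b] \<in> R" "[c, d] \<in> R" "[e, g] \<in> R"
  shows "[f a c e, f b d g] \<in> R"
  using preserves3D[OF assms] by (simp add: upt_rec)

lemma preserves3_binaryI:
  assumes "\<And>r. r \<in> R \<Longrightarrow> length r = 2"
    and "\<And>a b c d e g. [a, b] \<in> R \<Longrightarrow> [c, d] \<in> R \<Longrightarrow> [e, g] \<in> R \<Longrightarrow> [f a c e, f b d g] \<in> R"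
  shows "preserves3 f R"
  unfolding preserves3_def
proof (intro ballI impI)
  fix r1 r2 r3
  assume "r1 \<in> R" "r2 \<in> R" "r3 \<in> R"
  moreover have "\<exists>a b. r = [a, b]" if "r \<in> R" for r
    using assms(1)[OF that] by (fastforce simp: length_Suc_conv numeral_2_eq_2)
  ultimately obtain a b c d e g where "r1 = [a, b]" "r2 = [c, d]" "r3 = [e, g]"
    by meson
  then show "map (\<lambda>i. f (r1 ! i) (r2 ! i) (r3 ! i)) [0..<length r1] \<in> R"
    using assms(2) \<open>r1 \<in> R\<close> \<open>r2 \<in> R\<close> \<open>r3 \<in> R\<close> by (simp add: upt_rec)
qed

lemma not_satisfies_Sigma1_M1: "\<not> satisfies_Sigma1 {0, 1, 2::nat} M1_rels"
proof
  assume "satisfies_Sigma1 {0, 1, 2::nat} M1_rels"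
  then obtain f where pol: "f \<in> Pol3 {0, 1, 2} M1_rels" and qm: "quasi_majority {0, 1, 2} f"
    and reverse: "\<forall>x\<in>{0, 1, 2::nat}. \<forall>y\<in>{0, 1, 2}. \<forall>z\<in>{0, 1, 2}. f x y z = f z y x"
    unfolding satisfies_Sigma1_def by blast
  from pol have psi: "preserves3 f psi2" and mu: "preserves3 f mu2" and "f 0 0 0 = 0"
    by (auto simp: Pol3_def M1_rels_def preserves3_singleton_iff)
  have "[f 0 2 1, f 1 2 0] \<in> psi2"
    using preserves3_binaryD[OF psi, of 0 1 2 2 1 0] by (simp add: psi2_def)
  moreover have "f 1 2 0 = f 0 2 1"
    using reverse[rule_format, of 1 2 0] by simp
  ultimately have "f 0 2 1 = 2"
    by (auto simp: psi2_def)
  moreover have "f 0 2 0 = 0"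
    using qm \<open>f 0 0 0 = 0\<close> by (simp add: quasi_majority_def)
  moreover have "[f 0 2 1, f 0 2 0] \<in> mu2"
    using preserves3_binaryD[OF mu, of 0 0 2 2 1 0] by (simp add: mu2_def)
  ultimately show False
    by (simp add: mu2_def)
qed

definition majority3 :: "'a \<Rightarrow> 'a \<Rightarrow> 'a \<Rightarrow> 'a" where
  "majority3 x y z = (if x = y then x else z)"

lemma majority3_in_args: "majority3 x y z \<in> {x, z}"
  by (simp add: majority3_def)

lemma quasi_majority_majority3: "quasi_majority A majority3"
  by (simp add: quasi_majority_def majority3_def)

lemma majority3_reverse: "x = y \<or> y = z \<or> x = z \<Longrightarrow> majority3 x y z = majority3 z y x"
  by (auto simp: majority3_def)

lemma majority3_inj_on:
  "inj_on h A \<Longrightarrow> x \<in> A \<Longrightarrow> y \<in> A \<Longrightarrow> majority3 (h x) (h y) (h z) = h (majority3 x y z)"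
  by (auto simp: majority3_def dest: inj_onD)

lemma preserves3_majority3_graph:
  assumes "inj_on h A"
  shows "preserves3 majority3 {[x, h x] | x. x \<in> A}"
proof (rule preserves3_binaryI)
  fix a b c d e g
  assume "[a, b] \<in> {[x, h x] | x. x \<in> A}" "[c, d] \<in> {[x, h x] | x. x \<in> A}"
    "[e, g] \<in> {[x, h x] | x. x \<in> A}"
  then have "a \<in> A" "c \<in> A" "e \<in> A" "b = h a" "d = h c" "g = h e"
    by auto
  moreover have "majority3 a c e \<in> A"
    using majority3_in_args[of a c e] \<open>a \<in> A\<close> \<open>e \<in> A\<close> by auto
  ultimately show "[majority3 a c e, majority3 b d g] \<in> {[x, h x] | x. x \<in> A}"
    using majority3_inj_on[OF assms] by auto
qed auto

lemma neq01_eq_graph: "neq01 = {[x, 1 - x] | x. x \<in> {0, 1::nat}}"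
  by (auto simp: neq01_def)

lemma satisfies_Sigma1_C2: "satisfies_Sigma1 {0, 1::nat} C2_rels"
  unfolding satisfies_Sigma1_def
proof (intro bexI conjI)
  show "quasi_majority {0, 1} majority3"
    by (rule quasi_majority_majority3)
  show "\<forall>x\<in>{0, 1::nat}. \<forall>y\<in>{0, 1}. \<forall>z\<in>{0, 1}. majority3 x y z = majority3 z y x"
    by (auto intro!: majority3_reverse)
  have "inj_on (\<lambda>x. 1 - x) {0, 1::nat}"
    by simp
  then have "preserves3 majority3 neq01"
    unfolding neq01_eq_graph by (rule preserves3_majority3_graph)
  then show "majority3 \<in> Pol3 {0, 1} C2_rels"
    using majority3_in_args
    by (auto simp: Pol3_def C2_rels_def preserves3_singleton_iff majority3_def)
qed

theorem lemma6p7: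
  shows "\<not> satisfies_Sigma1 {0,1,2::nat} M1_rels \<and> satisfies_Sigma1 {0,1::nat} C2_rels"
  using not_satisfies_Sigma1_M1 satisfies_Sigma1_C2 by blast

end
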